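(* Let $G$ be a complete $k$-partite graph ($k\ge 3$) on $n$ vertices with parts $V_1,\dots,V_k$, and let $w_0$ be any initial weighting. Then $S_{w_0}(i)=0$ for all but exactly one index $i$, and $$\mathcal{RC}(G,w_0)=n+S_{w_0}-1,\qquad\text{where } S_{w_0}=\sum_{i=1}^k S_{w_0}(i)=\max_{1\le i\le k}S_{w_0}(i).$$
   Context: Robot crawler model: let $G=(V,E)$ be a finite connected simple graph with $|V|=n$. An initial weighting is a bijection $w_0:V\to\{-n,-n+1,\dots,-1\}$. At time $1$ the crawler visits $w_0^{-1}(-n)$. If the crawler visits vertex $v$ at time $t$, then $w_t(v)=t$ and $w_t(u)=w_{t-1}(u)$ for all $u\neq v$. If $\min_{y\in V}w_t(y)>0$, the process stops and $\mathcal{RC}(G,w_0):=t$. Otherwise, at time $t+1$ the crawler moves to the neighbour $u$ of $v$ minimising $w_t(u)$. A vertex is "cleaned" at the first time it is visited. A complete $k$-partite graph with parts $V_1,\dots,V_k$ has an edge between $u$ and $v$ iff they lie in different parts. The surplus $S_{w_0}(i)$ of part $V_i$ is the number of not-yet-cleaned vertices of $V_i$ at the first moment when all vertices of $V\setminus V_i$ have been cleaned (and $0$ if $V_i$ is fully cleaned by then). *)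

theory Defs
  imports Main
begin

text \<open>Robot crawler on a graph with vertex set V and (symmetric) adjacency E.
  crawl V E w0 t = (vertex visited at time t, weighting w_t), for t \<ge> 1;
  at t = 0 the weighting is w0 (position meaningless).\<close>

fun crawl :: "'a set \<Rightarrow> ('a \<Rightarrow> 'a \<Rightarrow> bool) \<Rightarrow> ('a \<Rightarrow> int) \<Rightarrow> nat \<Rightarrow> 'a \<times> ('a \<Rightarrow> int)" where
  "crawl V E w0 0 = (undefined, w0)"
| "crawl V E w0 (Suc t) =
     (let p = fst (crawl V E w0 t); w = snd (crawl V E w0 t);
          p' = (if t = 0 then (THE v. v \<in> V \<and> w0 v = - int (card V))
                else (THE u. E p u \<and> (\<forall>u'. E p u' \<and> u' \<noteq> u \<longrightarrow> w u < w u')))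
      in (p', w(p' := int (Suc t))))"

definition crawler_pos :: "'a set \<Rightarrow> ('a \<Rightarrow> 'a \<Rightarrow> bool) \<Rightarrow> ('a \<Rightarrow> int) \<Rightarrow> nat \<Rightarrow> 'a" where
  "crawler_pos V E w0 t = fst (crawl V E w0 t)"

definition crawler_weight :: "'a set \<Rightarrow> ('a \<Rightarrow> 'a \<Rightarrow> bool) \<Rightarrow> ('a \<Rightarrow> int) \<Rightarrow> nat \<Rightarrow> 'a \<Rightarrow> int" where
  "crawler_weight V E w0 t = snd (crawl V E w0 t)"

definition crawler_stops_at :: "'a set \<Rightarrow> ('a \<Rightarrow> 'a \<Rightarrow> bool) \<Rightarrow> ('a \<Rightarrow> int) \<Rightarrow> nat \<Rightarrow> bool" where
  "crawler_stops_at V E w0 t \<longleftrightarrow> 1 \<le> t \<and> (\<forall>y\<in>V. crawler_weight V E w0 t y > 0)"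

definition RC :: "'a set \<Rightarrow> ('a \<Rightarrow> 'a \<Rightarrow> bool) \<Rightarrow> ('a \<Rightarrow> int) \<Rightarrow> nat" where
  "RC V E w0 = (LEAST t. crawler_stops_at V E w0 t)"

definition cleaned :: "'a set \<Rightarrow> ('a \<Rightarrow> 'a \<Rightarrow> bool) \<Rightarrow> ('a \<Rightarrow> int) \<Rightarrow> nat \<Rightarrow> 'a \<Rightarrow> bool" where
  "cleaned V E w0 t v \<longleftrightarrow> (\<exists>s\<in>{1..t}. crawler_pos V E w0 s = v)"

definition initial_weighting :: "'a set \<Rightarrow> ('a \<Rightarrow> int) \<Rightarrow> bool" where
  "initial_weighting V w0 \<longleftrightarrow> bij_betw w0 V {- int (card V) .. -1}"

definition multipartite_parts :: "'a set \<Rightarrow> nat \<Rightarrow> (nat \<Rightarrow> 'a set) \<Rightarrow> bool" where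
  "multipartite_parts V k P \<longleftrightarrow>
     (\<forall>i\<in>{1..k}. P i \<noteq> {}) \<and>
     (\<forall>i\<in>{1..k}. \<forall>j\<in>{1..k}. i \<noteq> j \<longrightarrow> P i \<inter> P j = {}) \<and>
     (\<Union>i\<in>{1..k}. P i) = V"

definition multipartite_adj :: "nat \<Rightarrow> (nat \<Rightarrow> 'a set) \<Rightarrow> 'a \<Rightarrow> 'a \<Rightarrow> bool" where
  "multipartite_adj k P u v \<longleftrightarrow>
     (\<exists>i\<in>{1..k}. \<exists>j\<in>{1..k}. i \<noteq> j \<and> u \<in> P i \<and> v \<in> P j)"

definition surplus :: "'a set \<Rightarrow> nat \<Rightarrow> (nat \<Rightarrow> 'a set) \<Rightarrow> ('a \<Rightarrow> int) \<Rightarrow> nat \<Rightarrow> nat" where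
  "surplus V k P w0 i =
     (let E = multipartite_adj k P;
          T = (LEAST t. \<forall>v \<in> V - P i. cleaned V E w0 t v)
      in card {v \<in> P i. \<not> cleaned V E w0 T v})"

end

theory Submission
  imports Defs
begin

text \<open>Cleaned vertices carry positive weights and dirty ones negative weights, so the crawler
  always moves to a dirty neighbour if it has one. In a complete multipartite graph this means
  that every step cleans a new vertex until, at some time \<open>T\<close>, all \<open>m\<close> remaining dirty
  vertices lie in the part of the crawler; then \<open>T + m = n\<close>. From then on the crawler alternates
  between a clean vertex of another part and a dirty vertex of its own part, so it needs exactly
  \<open>2m\<close> further steps and stops at \<open>n + m\<close>. This part is the only one with positive surplus:
  its surplus is \<open>m + 1\<close> (counting the vertex cleaned at time \<open>T\<close>), while every other part
  still contains the last dirty vertex at the moment its complement has been cleaned. The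
  argument works as soon as there are two parts.\<close>

lemma the_strict_argmin:
  fixes w :: "'a \<Rightarrow> 'b::linorder"
  assumes "finite {u. Q u}" "{u. Q u} \<noteq> {}" "inj_on w {u. Q u}"
  defines "a \<equiv> THE u. Q u \<and> (\<forall>u'. Q u' \<and> u' \<noteq> u \<longrightarrow> w u < w u')"
  shows "Q a" "\<And>u'. Q u' \<Longrightarrow> u' \<noteq> a \<Longrightarrow> w a < w u'"
proof -
  have "Min (w ` {u. Q u}) \<in> w ` {u. Q u}"
    using assms(1,2) by simp
  then obtain m where m: "Q m" "w m = Min (w ` {u. Q u})"
    by auto
  have strict: "\<forall>u'. Q u' \<and> u' \<noteq> m \<longrightarrow> w m < w u'"
  proof (intro allI impI)
    fix u' assume u': "Q u' \<and> u' \<noteq> m"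
    then have "w m \<le> w u'"
      using m(2) assms(1) by simp
    moreover have "w u' \<noteq> w m"
      using assms(3) u' m(1) unfolding inj_on_def by blast
    ultimately show "w m < w u'"
      by simp
  qed
  have "\<exists>!u. Q u \<and> (\<forall>u'. Q u' \<and> u' \<noteq> u \<longrightarrow> w u < w u')"
    using m(1) strict by (metis order.asym)
  from theI'[OF this] show "Q a" "\<And>u'. Q u' \<Longrightarrow> u' \<noteq> a \<Longrightarrow> w a < w u'"
    unfolding a_def by blast+
qed

lemma sum_Max_single_support:
  fixes f :: "'a \<Rightarrow> nat"
  assumes "finite A" "a \<in> A" "\<And>i. i \<in> A \<Longrightarrow> i \<noteq> a \<Longrightarrow> f i = 0"
  shows "sum f A = f a" "Max (f ` A) = f a"
proof -
  show "sum f A = f a"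
    using sum.mono_neutral_right[of A "{a}" f] assms by simp
  show "Max (f ` A) = f a"
  proof (rule Max_eqI)
    show "finite (f ` A)" "f a \<in> f ` A"
      using assms(1,2) by simp_all
    fix y assume "y \<in> f ` A"
    then show "y \<le> f a"
      using assms(3) by fastforce
  qed
qed

section \<open>The crawler on a finite graph without isolated vertices\<close>

locale robot_crawler =
  fixes V :: "'a set" and E :: "'a \<Rightarrow> 'a \<Rightarrow> bool" and w0 :: "'a \<Rightarrow> int"
  assumes finite_V: "finite V"
    and V_nonempty: "V \<noteq> {}"
    and edges_in_V: "E u v \<Longrightarrow> u \<in> V \<and> v \<in> V"
    and no_isolated: "u \<in> V \<Longrightarrow> \<exists>v. E u v"
    and weighting: "initial_weighting V w0"
begin

abbreviation pos :: "nat \<Rightarrow> 'a" where "pos \<equiv> crawler_pos V E w0"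
abbreviation wt :: "nat \<Rightarrow> 'a \<Rightarrow> int" where "wt \<equiv> crawler_weight V E w0"
abbreviation clean :: "nat \<Rightarrow> 'a \<Rightarrow> bool" where "clean \<equiv> cleaned V E w0"

definition dirty :: "nat \<Rightarrow> 'a set" where
  "dirty t = {v \<in> V. \<not> clean t v}"

lemma pos_Suc:
  "t \<noteq> 0 \<Longrightarrow>
    pos (Suc t) = (THE u. E (pos t) u \<and> (\<forall>u'. E (pos t) u' \<and> u' \<noteq> u \<longrightarrow> wt t u < wt t u'))"
  by (simp add: crawler_pos_def crawler_weight_def Let_def)

lemma wt_Suc: "wt (Suc t) = (wt t)(pos (Suc t) := int (Suc t))"
  by (simp add: crawler_pos_def crawler_weight_def Let_def)

lemma clean_Suc: "clean (Suc t) v \<longleftrightarrow> clean t v \<or> pos (Suc t) = v"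
  by (auto simp: cleaned_def atLeastAtMostSuc_conv)

lemma w0_range: "v \<in> V \<Longrightarrow> w0 v \<in> {- int (card V) .. -1}"
  using weighting unfolding initial_weighting_def bij_betw_def by blast

lemma pos_1_in_V: "pos 1 \<in> V"
proof -
  have "- int (card V) \<in> w0 ` V"
    using weighting finite_V V_nonempty
    by (simp add: initial_weighting_def bij_betw_def card_gt_0_iff Suc_le_eq)
  moreover have "inj_on w0 V"
    using weighting unfolding initial_weighting_def bij_betw_def by blast
  ultimately have "\<exists>!v. v \<in> V \<and> w0 v = - int (card V)"
    unfolding inj_on_def by (metis imageE)
  from theI'[OF this] show ?thesis
    by (simp add: crawler_pos_def Let_def)
qed

definition weight_invariant :: "nat \<Rightarrow> bool" where
  "weight_invariant t \<longleftrightarrow>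
     (\<forall>v\<in>V. (clean t v \<longrightarrow> 0 < wt t v \<and> wt t v \<le> int t) \<and> (\<not> clean t v \<longrightarrow> wt t v = w0 v))
     \<and> inj_on (wt t) V \<and> (t \<noteq> 0 \<longrightarrow> pos t \<in> V)"

lemma step_of_weight_invariant:
  assumes "t \<noteq> 0" "weight_invariant t"
  shows "E (pos t) (pos (Suc t))"
    and "\<And>u. E (pos t) u \<Longrightarrow> u \<noteq> pos (Suc t) \<Longrightarrow> wt t (pos (Suc t)) < wt t u"
proof -
  have nbrs: "{u. E (pos t) u} \<subseteq> V"
    using edges_in_V by blast
  have "pos t \<in> V"
    using assms unfolding weight_invariant_def by blast
  then have "{u. E (pos t) u} \<noteq> {}"
    using no_isolated by blast
  moreover have "finite {u. E (pos t) u}"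
    using finite_subset[OF nbrs finite_V] .
  moreover have "inj_on (wt t) {u. E (pos t) u}"
    using assms(2) inj_on_subset[OF _ nbrs] unfolding weight_invariant_def by blast
  ultimately show "E (pos t) (pos (Suc t))"
    "\<And>u. E (pos t) u \<Longrightarrow> u \<noteq> pos (Suc t) \<Longrightarrow> wt t (pos (Suc t)) < wt t u"
    using the_strict_argmin[of "E (pos t)" "wt t"] unfolding pos_Suc[OF assms(1)] by blast+
qed

lemma weight_invariant_holds: "weight_invariant t"
proof (induction t)
  case 0
  then show ?case
    using weighting by (simp add: weight_invariant_def initial_weighting_def bij_betw_def
        cleaned_def crawler_weight_def)
next
  case (Suc t)
  have p_in_V: "pos (Suc t) \<in> V"
    using pos_1_in_V step_of_weight_invariant(1)[OF _ Suc.IH] edges_in_V by (cases "t = 0") auto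
  have "wt t v \<le> int t" if "v \<in> V" for v
    using Suc.IH w0_range[OF that] that unfolding weight_invariant_def by force
  then have "inj_on (wt (Suc t)) V"
    using Suc.IH unfolding wt_Suc weight_invariant_def by (intro inj_on_fun_updI) force+
  moreover have "(clean (Suc t) v \<longrightarrow> 0 < wt (Suc t) v \<and> wt (Suc t) v \<le> int (Suc t))
      \<and> (\<not> clean (Suc t) v \<longrightarrow> wt (Suc t) v = w0 v)" if "v \<in> V" for v
    using Suc.IH that unfolding weight_invariant_def wt_Suc clean_Suc by force
  ultimately show ?case
    using p_in_V unfolding weight_invariant_def by blast
qed

lemma pos_in_V: "t \<noteq> 0 \<Longrightarrow> pos t \<in> V"
  using weight_invariant_holds unfolding weight_invariant_def by blast

lemma wt_clean: "v \<in> V \<Longrightarrow> clean t v \<Longrightarrow> 0 < wt t v"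
  using weight_invariant_holds unfolding weight_invariant_def by blast

lemma wt_dirty: "v \<in> dirty t \<Longrightarrow> wt t v < 0"
  using weight_invariant_holds[of t] w0_range[of v] unfolding weight_invariant_def dirty_def by force

lemma step_edge: "t \<noteq> 0 \<Longrightarrow> E (pos t) (pos (Suc t))"
  using step_of_weight_invariant(1)[OF _ weight_invariant_holds] .

lemma moves_to_dirty:
  assumes "t \<noteq> 0" "v \<in> dirty t" "E (pos t) v"
  shows "pos (Suc t) \<in> dirty t"
proof (cases "v = pos (Suc t)")
  case False
  have "pos (Suc t) \<in> V"
    using edges_in_V step_edge[OF assms(1)] by blast
  moreover have "wt t (pos (Suc t)) < 0"
    using step_of_weight_invariant(2)[OF assms(1) weight_invariant_holds assms(3) False]
      wt_dirty[OF assms(2)] by linarith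
  ultimately show ?thesis
    using wt_clean unfolding dirty_def by force
qed (use assms in simp)

lemma finite_dirty: "finite (dirty t)"
  using finite_V unfolding dirty_def by simp

lemma dirty_0: "dirty 0 = V"
  by (simp add: dirty_def cleaned_def)

lemma dirty_Suc: "dirty (Suc t) = dirty t - {pos (Suc t)}"
  unfolding dirty_def clean_Suc by auto

lemma dirty_antimono: "s \<le> t \<Longrightarrow> dirty t \<subseteq> dirty s"
  by (rule lift_Suc_antimono_le[of dirty]) (auto simp: dirty_Suc)

lemma stops_at_iff: "crawler_stops_at V E w0 t \<longleftrightarrow> 1 \<le> t \<and> dirty t = {}"
proof -
  have "(\<forall>v\<in>V. 0 < wt t v) \<longleftrightarrow> (\<forall>v\<in>V. clean t v)"
    using wt_clean wt_dirty unfolding dirty_def by force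
  then show ?thesis
    unfolding crawler_stops_at_def dirty_def by auto
qed

lemma RC_eqI:
  assumes "1 \<le> R" "dirty R = {}" "\<And>s. 1 \<le> s \<Longrightarrow> s < R \<Longrightarrow> dirty s \<noteq> {}"
  shows "RC V E w0 = R"
  unfolding RC_def using assms by (intro Least_equality) (auto simp: stops_at_iff not_le[symmetric])

end

section \<open>Complete multipartite graphs\<close>

locale complete_multipartite =
  fixes V :: "'a set" and k :: nat and P :: "nat \<Rightarrow> 'a set"
  assumes finite_V: "finite V"
    and two_parts: "2 \<le> k"
    and parts: "multipartite_parts V k P"
begin

definition part_of :: "'a \<Rightarrow> nat" where
  "part_of v = (THE i. i \<in> {1..k} \<and> v \<in> P i)"

lemma part_ofI: "i \<in> {1..k} \<Longrightarrow> v \<in> P i \<Longrightarrow> part_of v = i"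
  using parts unfolding part_of_def multipartite_parts_def by (intro the_equality) blast+

lemma part_of_in_parts: "v \<in> V \<Longrightarrow> part_of v \<in> {1..k} \<and> v \<in> P (part_of v)"
  using parts part_ofI unfolding multipartite_parts_def by blast

lemma in_part_iff: "i \<in> {1..k} \<Longrightarrow> v \<in> P i \<longleftrightarrow> v \<in> V \<and> part_of v = i"
  using parts part_ofI part_of_in_parts unfolding multipartite_parts_def by blast

lemma multipartite_adj_iff:
  "multipartite_adj k P u v \<longleftrightarrow> u \<in> V \<and> v \<in> V \<and> part_of u \<noteq> part_of v"
  unfolding multipartite_adj_def using in_part_iff part_of_in_parts by metis

lemma exists_other_part: "u \<in> V \<Longrightarrow> \<exists>v\<in>V. part_of v \<noteq> part_of u"
proof -
  assume "u \<in> V"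
  define j where "j = (if part_of u = 1 then 2 else 1 :: nat)"
  have j: "j \<in> {1..k}" "j \<noteq> part_of u"
    using two_parts unfolding j_def by auto
  then obtain v where "v \<in> P j"
    using parts unfolding multipartite_parts_def by blast
  then have "v \<in> V" "part_of v = j"
    using in_part_iff[OF j(1)] by auto
  then show ?thesis
    using j(2) by blast
qed

lemma V_nonempty: "V \<noteq> {}"
  using parts two_parts unfolding multipartite_parts_def by fastforce

end

section \<open>The crawler on a complete multipartite graph\<close>

locale multipartite_crawler = complete_multipartite +
  fixes w0 :: "'a \<Rightarrow> int"
  assumes weighting: "initial_weighting V w0"
begin

sublocale robot_crawler V "multipartite_adj k P" w0
proof unfold_locales
  fix u assume "u \<in> V"
  then show "\<exists>v. multipartite_adj k P u v"
    using exists_other_part multipartite_adj_iff by metis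
qed (auto simp: finite_V V_nonempty weighting multipartite_adj_iff)

definition settled :: "nat \<Rightarrow> bool" where
  "settled t \<longleftrightarrow> (\<forall>v\<in>dirty t. part_of v = part_of (pos t))"

lemma unsettled_step_cleans:
  "t \<noteq> 0 \<Longrightarrow> \<not> settled t \<Longrightarrow> pos (Suc t) \<in> dirty t"
  using moves_to_dirty pos_in_V unfolding settled_def dirty_def multipartite_adj_iff by fastforce

lemma card_dirty_before_settling:
  "1 \<le> t \<Longrightarrow> (\<And>s. 1 \<le> s \<Longrightarrow> s < t \<Longrightarrow> \<not> settled s) \<Longrightarrow> card (dirty t) + t = card V"
proof (induction t rule: nat_induct_at_least)
  case base
  show ?case
    using pos_1_in_V finite_V V_nonempty
    by (simp add: dirty_Suc dirty_0 card_gt_0_iff Suc_le_eq)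
next
  case (Suc t)
  have "pos (Suc t) \<in> dirty t"
    using unsettled_step_cleans Suc by simp
  then have "card (dirty (Suc t)) = card (dirty t) - 1" "0 < card (dirty t)"
    using finite_dirty by (auto simp: dirty_Suc card_gt_0_iff)
  then show ?case
    using Suc by simp
qed

lemma eventually_settled: "\<exists>t\<ge>1. settled t"
proof (rule ccontr)
  assume "\<not> (\<exists>t\<ge>1. settled t)"
  then have "card (dirty (Suc (card V))) + Suc (card V) = card V"
    using card_dirty_before_settling[of "Suc (card V)"] by auto
  then show False
    by simp
qed

definition settle_time :: nat where
  "settle_time = (LEAST t. 1 \<le> t \<and> settled t)"

abbreviation T where "T \<equiv> settle_time"
abbreviation home where "home \<equiv> part_of (pos T)"
abbreviation m where "m \<equiv> card (dirty T)"

lemma settle_time: "1 \<le> T" "settled T" "\<And>s. 1 \<le> s \<Longrightarrow> s < T \<Longrightarrow> \<not> settled s"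
proof -
  show "1 \<le> T" "settled T"
    using LeastI_ex[OF eventually_settled] unfolding settle_time_def by auto
  show "\<And>s. 1 \<le> s \<Longrightarrow> s < T \<Longrightarrow> \<not> settled s"
    using not_less_Least unfolding settle_time_def by blast
qed

lemma card_dirty_before: "1 \<le> s \<Longrightarrow> s \<le> T \<Longrightarrow> card (dirty s) + s = card V"
  using card_dirty_before_settling settle_time(3) by simp

lemma settle_time_ge_2: "2 \<le> T"
proof (rule ccontr)
  assume "\<not> 2 \<le> T"
  then have "T = 1"
    using settle_time(1) by simp
  obtain v where "v \<in> V" "part_of v \<noteq> part_of (pos 1)"
    using exists_other_part[OF pos_1_in_V] by blast
  moreover from this have "v \<in> dirty 1"
    using dirty_Suc[of 0] by (auto simp: dirty_0)
  ultimately show False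
    using settle_time(2) \<open>T = 1\<close> unfolding settled_def by auto
qed

lemma dirty_before_settling:
  "dirty (T - 1) = insert (pos T) (dirty T)" "pos T \<notin> dirty T"
  "\<And>v. v \<in> dirty (T - 1) \<Longrightarrow> part_of v = home"
proof -
  have "pos T \<in> dirty (T - 1)"
    using unsettled_step_cleans[of "T - 1"] settle_time settle_time_ge_2 by simp
  then show "dirty (T - 1) = insert (pos T) (dirty T)" "pos T \<notin> dirty T"
    using dirty_Suc[of "T - 1"] settle_time_ge_2 by auto
  then show "\<And>v. v \<in> dirty (T - 1) \<Longrightarrow> part_of v = home"
    using settle_time(2) unfolding settled_def by auto
qed

lemma settled_two_steps:
  assumes "t \<noteq> 0" "settled t" "dirty t \<noteq> {}"
  shows "dirty (Suc t) = dirty t" "pos (Suc (Suc t)) \<in> dirty t"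
    and "part_of (pos (Suc (Suc t))) = part_of (pos t)" "settled (Suc (Suc t))"
proof -
  have away: "part_of (pos (Suc t)) \<noteq> part_of (pos t)"
    using step_edge[OF assms(1)] by (simp add: multipartite_adj_iff)
  then have "pos (Suc t) \<notin> dirty t"
    using assms(2) unfolding settled_def by blast
  then show stay: "dirty (Suc t) = dirty t"
    unfolding dirty_Suc by blast
  obtain v where v: "v \<in> dirty t"
    using assms(3) by blast
  have "v \<in> V" "part_of v = part_of (pos t)"
    using v assms(2) unfolding settled_def dirty_def by auto
  then have "multipartite_adj k P (pos (Suc t)) v"
    using away pos_in_V[of "Suc t"] by (simp add: multipartite_adj_iff)
  then show returns: "pos (Suc (Suc t)) \<in> dirty t"
    using moves_to_dirty[of "Suc t" v] v stay by simp
  then show same_part: "part_of (pos (Suc (Suc t))) = part_of (pos t)"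
    using assms(2) unfolding settled_def by blast
  show "settled (Suc (Suc t))"
    unfolding settled_def
  proof
    fix u assume "u \<in> dirty (Suc (Suc t))"
    then have "u \<in> dirty t"
      using stay by (simp add: dirty_Suc)
    then show "part_of u = part_of (pos (Suc (Suc t)))"
      using same_part assms(2) unfolding settled_def by simp
  qed
qed

lemma after_settling:
  "i \<le> m \<Longrightarrow> card (dirty (T + 2 * i)) = m - i \<and> settled (T + 2 * i)
     \<and> part_of (pos (T + 2 * i)) = home \<and> (\<forall>s. T \<le> s \<and> s < T + 2 * i \<longrightarrow> dirty s \<noteq> {})"
proof (induction i)
  case 0
  show ?case
    using settle_time(2) by auto
next
  case (Suc i)
  define t where "t = T + 2 * i"
  have IH: "card (dirty t) = m - i" "settled t" "part_of (pos t) = home"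
    "\<forall>s. T \<le> s \<and> s < t \<longrightarrow> dirty s \<noteq> {}"
    using Suc unfolding t_def by auto
  have "t \<noteq> 0" "dirty t \<noteq> {}"
    using settle_time(1) IH(1) Suc.prems unfolding t_def by auto
  note two = settled_two_steps[OF this(1) IH(2) this(2)]
  have "card (dirty (Suc (Suc t))) = m - Suc i"
    using two(1,2) IH(1) finite_dirty by (simp add: dirty_Suc[of "Suc t"])
  moreover have "\<forall>s. T \<le> s \<and> s < Suc (Suc t) \<longrightarrow> dirty s \<noteq> {}"
    using IH(4) \<open>dirty t \<noteq> {}\<close> two(1) unfolding t_def by (metis less_Suc_eq)
  moreover have "Suc (Suc t) = T + 2 * Suc i"
    unfolding t_def by simp
  ultimately show ?case
    using two IH(3) by metis
qed

lemma card_V_eq: "card V = T + m"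
  using card_dirty_before[OF settle_time(1) order.refl] by simp

lemma stop_time:
  "dirty (T + 2 * m) = {}" "\<And>s. 1 \<le> s \<Longrightarrow> s < T + 2 * m \<Longrightarrow> dirty s \<noteq> {}"
proof -
  show "dirty (T + 2 * m) = {}"
    using after_settling[of m] finite_dirty by auto
  fix s assume "1 \<le> s" "s < T + 2 * m"
  then show "dirty s \<noteq> {}"
    using card_dirty_before[of s] card_V_eq after_settling[of m]
    by (cases "s < T") (auto simp: card_gt_0_iff)
qed

lemma RC_eq: "RC V (multipartite_adj k P) w0 = T + 2 * m"
  using RC_eqI settle_time(1) stop_time by simp

lemma surplus_eq:
  "surplus V k P w0 i
     = card {v \<in> P i. \<not> clean (LEAST t. \<forall>v \<in> V - P i. clean t v) v}"
  unfolding surplus_def Let_def ..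

lemma home_in_parts: "home \<in> {1..k}"
  using part_of_in_parts pos_in_V settle_time(1) by simp

lemma home_complement_cleaned_time: "(LEAST t. \<forall>v \<in> V - P home. clean t v) = T - 1"
proof (rule Least_equality)
  show "\<forall>v \<in> V - P home. clean (T - 1) v"
  proof
    fix v assume v: "v \<in> V - P home"
    then have "part_of v \<noteq> home"
      using in_part_iff[OF home_in_parts] by blast
    then show "clean (T - 1) v"
      using v dirty_before_settling(3)[of v] unfolding dirty_def by blast
  qed
next
  fix t assume outside: "\<forall>v \<in> V - P home. clean t v"
  have dirty_home: "part_of v = home" if "v \<in> dirty t" for v
  proof -
    have "v \<in> P home"
      using that outside unfolding dirty_def by blast
    then show ?thesis
      using in_part_iff[OF home_in_parts] by blast
  qed
  show "T - 1 \<le> t"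
  proof (rule ccontr)
    assume "\<not> T - 1 \<le> t"
    then have "Suc t < T" by simp
    show False
    proof (cases "t = 0")
      case True
      obtain v where "v \<in> V" "part_of v \<noteq> home"
        using exists_other_part pos_in_V settle_time(1) by (metis not_one_le_zero)
      then show False
        using dirty_home True by (simp add: dirty_0)
    next
      case False
      then have "pos (Suc t) \<in> dirty t"
        using unsettled_step_cleans settle_time(3) \<open>Suc t < T\<close> by simp
      then have "settled (Suc t)"
        using dirty_home unfolding settled_def dirty_Suc by auto
      then show False
        using settle_time(3)[of "Suc t"] \<open>Suc t < T\<close> by simp
    qed
  qed
qed

lemma surplus_home: "surplus V k P w0 home = m + 1"
proof -
  have "{v \<in> P home. \<not> clean (T - 1) v} = dirty (T - 1)"
    using dirty_before_settling(3) in_part_iff[OF home_in_parts] unfolding dirty_def by blast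
  then show ?thesis
    unfolding surplus_eq home_complement_cleaned_time
    using dirty_before_settling(1,2) finite_dirty by simp
qed

lemma surplus_other_part:
  assumes "i \<in> {1..k}" "i \<noteq> home"
  shows "surplus V k P w0 i = 0"
proof -
  define R where "R = T + 2 * m"
  obtain z where z: "z \<in> dirty (R - 1)"
    using stop_time(2)[of "R - 1"] settle_time_ge_2 unfolding R_def by fastforce
  moreover have "T - 1 \<le> R - 1"
    unfolding R_def by simp
  ultimately have "z \<in> dirty (T - 1)"
    using dirty_antimono by blast
  then have "z \<in> V - P i"
    using dirty_before_settling(3) in_part_iff[OF assms(1)] assms(2) unfolding dirty_def by auto
  define T' where "T' = (LEAST t. \<forall>v \<in> V - P i. clean t v)"
  have "\<forall>v \<in> V - P i. clean R v"
    using stop_time(1) unfolding R_def dirty_def by blast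
  then have "clean T' z"
    using LeastI[of "\<lambda>t. \<forall>v \<in> V - P i. clean t v"] \<open>z \<in> V - P i\<close> unfolding T'_def by blast
  then have "R \<le> T'"
    using z dirty_antimono[of T' "R - 1"] unfolding dirty_def by fastforce
  then have "dirty T' = {}"
    using dirty_antimono stop_time(1) unfolding R_def by blast
  then have "{v \<in> P i. \<not> clean T' v} = {}"
    using in_part_iff[OF assms(1)] unfolding dirty_def by blast
  then show ?thesis
    unfolding surplus_eq T'_def[symmetric] by (simp only: card.empty)
qed

end

theorem mainTheorem4:
  fixes V :: "'a set" and k :: nat and P :: "nat \<Rightarrow> 'a set" and w0 :: "'a \<Rightarrow> int"
  assumes "finite V"
    and "k \<ge> 3"
    and "multipartite_parts V k P"
    and "initial_weighting V w0"
  shows "(\<exists>!i. i \<in> {1..k} \<and> surplus V k P w0 i \<noteq> 0)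
    \<and> (\<exists>t. crawler_stops_at V (multipartite_adj k P) w0 t)
    \<and> RC V (multipartite_adj k P) w0 = card V + (\<Sum>i\<in>{1..k}. surplus V k P w0 i) - 1
    \<and> (\<Sum>i\<in>{1..k}. surplus V k P w0 i) = Max ((surplus V k P w0) ` {1..k})"
proof -
  interpret multipartite_crawler V k P w0
    using assms by unfold_locales simp_all
  note total = sum_Max_single_support[OF finite_atLeastAtMost home_in_parts surplus_other_part]
  show ?thesis
  proof (intro conjI)
    show "\<exists>!i. i \<in> {1..k} \<and> surplus V k P w0 i \<noteq> 0"
    proof (rule ex1I[of _ home])
      show "home \<in> {1..k} \<and> surplus V k P w0 home \<noteq> 0"
        using home_in_parts surplus_home by simp
      fix i assume "i \<in> {1..k} \<and> surplus V k P w0 i \<noteq> 0"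
      then show "i = home"
        using surplus_other_part[of i] by auto
    qed
    show "\<exists>t. crawler_stops_at V (multipartite_adj k P) w0 t"
      using stops_at_iff[of "T + 2 * m"] settle_time(1) stop_time(1) by auto
    show "RC V (multipartite_adj k P) w0 = card V + (\<Sum>i\<in>{1..k}. surplus V k P w0 i) - 1"
      using RC_eq card_V_eq surplus_home total(1) by simp
    show "(\<Sum>i\<in>{1..k}. surplus V k P w0 i) = Max (surplus V k P w0 ` {1..k})"
      using total by simp
  qed
qed

end
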